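(* Let $\rho$ be a positive semidefinite operator on $h$ with $\mathrm{tr}\,\rho>0$ and let $\rho_0$ be $\rho$ on slice $0$. Let $\mathcal H_E\cong\mathcal H$ be an environment with identity $\mathbb 1_E$, and let $|\Phi^+\rangle=\sum_{\mathbf i}|\mathbf i\rangle|\mathbf i\rangle_E$ (sum over the product basis). Define $$|\Psi\rangle=\big(\rho_0e^{i\tilde{\mathcal S}/2}\otimes\mathbb 1_E\big)|\Phi^+\rangle,\qquad |\overline\Psi\rangle=\big(e^{i\tilde{\mathcal S}/2}\otimes\mathbb 1_E\big)^\dagger|\Phi^+\rangle,\qquad R=\frac{|\Psi\rangle\langle\overline\Psi|}{\langle\overline\Psi|\Psi\rangle}.$$ Then, for all operators $O^{(0)},\dots,O^{(N-1)}$ on $h$, $$\mathrm{Tr}\Big[R\Big(\big(\textstyle\bigotimes_tO^{(t)}_t\big)\otimes\mathbb 1_E\Big)\Big]=\frac{\langle\overline\Psi|\big(\bigotimes_tO^{(t)}_t\big)\otimes\mathbb 1_E|\Psi\rangle}{\langle\overline\Psi|\Psi\rangle}=\frac{\mathrm{tr}\big[\rho\,O^{(N-1)}(\epsilon(N-1))\cdots O^{(1)}(\epsilon)\,O^{(0)}(0)\big]}{\mathrm{tr}[\rho]},$$ where $O(s)=e^{isH}Oe^{-isH}$.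
   Context: Bosonic-like setting. Fix integers $d\ge1$, $N\ge1$, a real $\epsilon>0$, and set $T=\epsilon N$. Let $h$ be a $d$-dimensional Hilbert space with orthonormal basis $\{|i\rangle\}$ and trace $\mathrm{tr}$. The space $\mathcal H$. Let $\mathcal H=h^{\otimes N}$, with factors indexed by slices $t=0,\dots,N-1$. For an operator $A$ on $h$, $A_t$ denotes $A$ on factor $t$, and $\bigotimes_tO^{(t)}_t=O^{(0)}\otimes\dots\otimes O^{(N-1)}$. Time translation. Let $C$ be the cyclic shift $C|i_0i_1\dots i_{N-1}\rangle=|i_{N-1}i_0\dots i_{N-2}\rangle$. Fix a hermitian $\mathcal P$ with $e^{i\epsilon\mathcal P}=C$. Quantum action. Let $H$ be a hermitian operator on $h$. Define $$e^{i\mathcal S}=C\prod_te^{-i\epsilon H_t},\qquad \mathcal V=\prod_te^{i\epsilon tH_t},$$ $$e^{i\tilde{\mathcal S}}=e^{iTH_0}e^{i\mathcal S}\ \big(=\mathcal V^\dagger C\mathcal V\big),\qquad e^{i\tilde{\mathcal S}/2}=\mathcal V^\dagger e^{i\epsilon\mathcal P/2}\mathcal V.$$ *)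

theory Defs
  imports "HOL-Analysis.Analysis" "Jordan_Normal_Form.Matrix"
begin

text \<open>The space h has basis indexed by 0..<d; H = h^(tensor N) has basis indexed by
  0..<d^N, where basis index x corresponds to the product state
  with slice-t digit (x div d^t) mod d.\<close>

definition digit :: "nat \<Rightarrow> nat \<Rightarrow> nat \<Rightarrow> nat" where
  "digit d x t = (x div d ^ t) mod d"

definition cadj :: "complex mat \<Rightarrow> complex mat" where
  "cadj A = mat (dim_col A) (dim_row A) (\<lambda>(i,j). cnj (A $$ (j,i)))"

definition ctrace :: "complex mat \<Rightarrow> complex" where
  "ctrace A = (\<Sum>i<dim_row A. A $$ (i,i))"

definition hermitian :: "complex mat \<Rightarrow> bool" where
  "hermitian A \<longleftrightarrow> square_mat A \<and> cadj A = A"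

definition psd :: "complex mat \<Rightarrow> bool" where
  "psd A \<longleftrightarrow> hermitian A \<and>
     (\<forall>v \<in> carrier_vec (dim_row A). Re (conjugate v \<bullet> (A *\<^sub>v v)) \<ge> 0)"

definition mexp :: "complex mat \<Rightarrow> complex mat" where
  "mexp A = mat (dim_row A) (dim_row A)
     (\<lambda>(i,j). \<Sum>k. (A ^\<^sub>m k) $$ (i,j) / of_nat (fact k))"

definition tensor_ops :: "nat \<Rightarrow> nat \<Rightarrow> (nat \<Rightarrow> complex mat) \<Rightarrow> complex mat" where
  "tensor_ops d N Ops = mat (d ^ N) (d ^ N)
     (\<lambda>(x,y). \<Prod>t<N. Ops t $$ (digit d x t, digit d y t))"

definition on_slice :: "nat \<Rightarrow> nat \<Rightarrow> nat \<Rightarrow> complex mat \<Rightarrow> complex mat" where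
  "on_slice d N t A = tensor_ops d N (\<lambda>s. if s = t then A else 1\<^sub>m d)"

text \<open>cyclic shift C |i_0 i_1 ... i_(N-1)> = |i_(N-1) i_0 ... i_(N-2)>\<close>
definition cshift :: "nat \<Rightarrow> nat \<Rightarrow> complex mat" where
  "cshift d N = mat (d ^ N) (d ^ N)
     (\<lambda>(y,x). if (\<forall>t<N. digit d y t = digit d x ((t + N - 1) mod N)) then 1 else 0)"

definition kron :: "complex mat \<Rightarrow> complex mat \<Rightarrow> complex mat" where
  "kron A B = mat (dim_row A * dim_row B) (dim_col A * dim_col B)
     (\<lambda>(i,j). A $$ (i div dim_row B, j div dim_col B) * B $$ (i mod dim_row B, j mod dim_col B))"

text \<open>|Phi+> = sum_i |i>|i>_E in H (x) H_E, dimension D*D, index x*D+e\<close>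
definition phi_plus :: "nat \<Rightarrow> complex vec" where
  "phi_plus D = vec (D * D) (\<lambda>k. if k div D = k mod D then 1 else 0)"

definition ket_bra :: "complex vec \<Rightarrow> complex vec \<Rightarrow> complex mat" where
  "ket_bra u w = mat (dim_vec u) (dim_vec w) (\<lambda>(i,j). u $ i * cnj (w $ j))"

definition braket :: "complex vec \<Rightarrow> complex vec \<Rightarrow> complex" where
  "braket w u = conjugate w \<bullet> u"

definition Vop :: "nat \<Rightarrow> nat \<Rightarrow> real \<Rightarrow> complex mat \<Rightarrow> complex mat" where
  "Vop d N \<epsilon> H = foldr (\<lambda>t M. on_slice d N t (mexp ((\<i> * of_real (\<epsilon> * real t)) \<cdot>\<^sub>m H)) * M)
                      [0..<N] (1\<^sub>m (d ^ N))"

text \<open>e^{i S~/2} = V^dagger e^{i eps P/2} V\<close>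
definition half_Stilde :: "nat \<Rightarrow> nat \<Rightarrow> real \<Rightarrow> complex mat \<Rightarrow> complex mat \<Rightarrow> complex mat" where
  "half_Stilde d N \<epsilon> H P =
     cadj (Vop d N \<epsilon> H) * mexp ((\<i> * of_real (\<epsilon> / 2)) \<cdot>\<^sub>m P) * Vop d N \<epsilon> H"

definition heis :: "complex mat \<Rightarrow> real \<Rightarrow> complex mat \<Rightarrow> complex mat" where
  "heis H s A = mexp ((\<i> * of_real s) \<cdot>\<^sub>m H) * A * mexp ((- \<i> * of_real s) \<cdot>\<^sub>m H)"

definition time_ordered :: "nat \<Rightarrow> nat \<Rightarrow> real \<Rightarrow> complex mat \<Rightarrow> (nat \<Rightarrow> complex mat) \<Rightarrow> complex mat" where
  "time_ordered d N \<epsilon> H Ops =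
     foldr (\<lambda>t M. heis H (\<epsilon> * real t) (Ops t) * M) (rev [0..<N]) (1\<^sub>m d)"

end

theory Submission
  imports Defs
begin

(*
  Write vec M = (M (x) 1)|Phi+> for the vectorisation of a D x D matrix M. Then
  <vec A|vec M> = tr (A^dagger M) and (A (x) 1) vec M = vec (A M), so with U = e^{i S~/2} and
  Y = (x)_t O^(t)_t the numerator is tr (U Y rho_0 U) and the denominator is tr (U rho_0 U).

  Since U = V^dagger e^{i eps P/2} V with V unitary, U^2 = V^dagger C V, and cyclicity of the
  trace turns tr (U Y rho_0 U) into tr (C V Y rho_0 V^dagger). Here V Y rho_0 V^dagger is the
  product operator with factors A_t = O^(t)(eps t) for t > 0 and A_0 = O^(0) rho, and against
  the cyclic shift a product operator has trace tr (C (x)_t A_t) = tr (A_(N-1) ... A_0), which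
  is tr (rho O^(N-1)(eps (N-1)) ... O^(0)(0)). The denominator is the case O^(t) = 1.
*)

section \<open>Matrix algebra\<close>

lemma index_mult_mat_sum:
  assumes "A \<in> carrier_mat n m" "B \<in> carrier_mat m p" "i < n" "j < p"
  shows "(A * B) $$ (i,j) = (\<Sum>k<m. A $$ (i,k) * B $$ (k,j))"
  using assms by (auto simp: scalar_prod_def lessThan_atLeast0 intro!: sum.cong)

lemma ctrace_mult_sum:
  assumes "A \<in> carrier_mat n m" "B \<in> carrier_mat m n"
  shows "ctrace (A * B) = (\<Sum>i<n. \<Sum>k<m. A $$ (i,k) * B $$ (k,i))"
  using assms by (simp add: ctrace_def index_mult_mat_sum[OF assms] del: index_mult_mat(1))

lemma ctrace_mult_comm:
  assumes "A \<in> carrier_mat n m" "B \<in> carrier_mat m n"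
  shows "ctrace (A * B) = ctrace (B * A)"
  unfolding ctrace_mult_sum[OF assms] ctrace_mult_sum[OF assms(2,1)]
  by (subst sum.swap) (simp add: mult.commute)

lemma pow_mat_add:
  fixes A :: "'a::semiring_1 mat"
  assumes A: "A \<in> carrier_mat n n"
  shows "A ^\<^sub>m p * A ^\<^sub>m q = A ^\<^sub>m (p + q)"
proof (induction q)
  case 0
  then show ?case using A by simp
next
  case (Suc q)
  have "A ^\<^sub>m p * A ^\<^sub>m Suc q = (A ^\<^sub>m p * A ^\<^sub>m q) * A"
    using A by (simp add: assoc_mult_mat[of _ n n _ n _ n])
  then show ?case using Suc by simp
qed

lemma pow_mat_smult:
  fixes A :: "'a::comm_ring_1 mat"
  assumes A: "A \<in> carrier_mat n n"
  shows "(z \<cdot>\<^sub>m A) ^\<^sub>m k = z ^ k \<cdot>\<^sub>m A ^\<^sub>m k"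
proof (induction k)
  case 0
  then show ?case using A by (intro eq_matI) auto
next
  case (Suc k)
  then show ?case
    using A by (intro eq_matI) (auto simp: mult_smult_assoc_mat[of _ n n _ n] mult_smult_distrib[of _ n n _ n])
qed

lemma dim_cadj [simp]: "dim_row (cadj A) = dim_col A" "dim_col (cadj A) = dim_row A"
  by (simp_all add: cadj_def)

lemma cadj_carrier_mat: "A \<in> carrier_mat n m \<Longrightarrow> cadj A \<in> carrier_mat m n"
  by auto

lemma cadj_one_mat: "cadj (1\<^sub>m n) = 1\<^sub>m n"
  by (intro eq_matI) (auto simp: cadj_def)

lemma cadj_cadj: "cadj (cadj A) = A"
  by (intro eq_matI) (auto simp: cadj_def)

lemma cadj_smult: "cadj (z \<cdot>\<^sub>m A) = cnj z \<cdot>\<^sub>m cadj A"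
  by (intro eq_matI) (auto simp: cadj_def)

lemma cadj_mult:
  assumes "A \<in> carrier_mat n m" "B \<in> carrier_mat m p"
  shows "cadj (A * B) = cadj B * cadj A"
  using assms by (intro eq_matI) (auto simp: cadj_def scalar_prod_def mult.commute)

lemma cadj_pow_mat:
  assumes A: "A \<in> carrier_mat n n"
  shows "cadj (A ^\<^sub>m k) = cadj A ^\<^sub>m k"
proof (induction k)
  case 0
  then show ?case using A cadj_carrier_mat[OF A] by (simp add: cadj_one_mat)
next
  case (Suc k)
  have "cadj (A ^\<^sub>m Suc k) = cadj A * cadj A ^\<^sub>m k"
    using A Suc by (simp add: cadj_mult[of _ n n])
  also have "\<dots> = cadj A ^\<^sub>m Suc k"
    using pow_mat_add[OF cadj_carrier_mat[OF A], of 1 k] cadj_carrier_mat[OF A] by simp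
  finally show ?case .
qed

definition ordered_prod :: "nat \<Rightarrow> (nat \<Rightarrow> 'a::semiring_1 mat) \<Rightarrow> nat \<Rightarrow> 'a mat" where
  "ordered_prod d B n = foldr (\<lambda>t M. B t * M) (rev [0..<n]) (1\<^sub>m d)"

lemma ordered_prod_0 [simp]: "ordered_prod d B 0 = 1\<^sub>m d"
  by (simp add: ordered_prod_def)

lemma ordered_prod_Suc: "ordered_prod d B (Suc n) = B n * ordered_prod d B n"
  by (simp add: ordered_prod_def)

lemma ordered_prod_carrier_mat:
  "(\<And>t. t < n \<Longrightarrow> B t \<in> carrier_mat d d) \<Longrightarrow> ordered_prod d B n \<in> carrier_mat d d"
  by (induction n) (auto simp: ordered_prod_Suc intro!: mult_carrier_mat)

lemma ordered_prod_one: "ordered_prod d (\<lambda>_. 1\<^sub>m d) n = (1\<^sub>m d :: 'a::semiring_1 mat)"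
  by (induction n) (simp_all add: ordered_prod_Suc)

lemma ordered_prod_mult_right:
  assumes "\<And>t. t \<le> n \<Longrightarrow> B t \<in> carrier_mat d d" "R \<in> carrier_mat d d"
  shows "ordered_prod d (B(0 := B 0 * R)) (Suc n) = ordered_prod d B (Suc n) * R"
  using assms
proof (induction n)
  case 0
  then show ?case by (simp add: ordered_prod_Suc)
next
  case (Suc n)
  have P: "ordered_prod d B (Suc n) \<in> carrier_mat d d"
    using Suc.prems by (intro ordered_prod_carrier_mat) auto
  have IH: "ordered_prod d (B(0 := B 0 * R)) (Suc n) = ordered_prod d B (Suc n) * R"
    using Suc.prems by (intro Suc.IH) auto
  have "ordered_prod d (B(0 := B 0 * R)) (Suc (Suc n)) = B (Suc n) * (ordered_prod d B (Suc n) * R)"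
    unfolding ordered_prod_Suc[of d _ "Suc n"] IH by simp
  also have "\<dots> = ordered_prod d B (Suc (Suc n)) * R"
    using Suc.prems P by (simp add: ordered_prod_Suc[of d _ "Suc n"] assoc_mult_mat[of _ d d _ d _ d])
  finally show ?case .
qed

section \<open>Matrix exponential\<close>

lemma norm_pow_mat_index_le:
  fixes A :: "complex mat"
  assumes A: "A \<in> carrier_mat n n" and "i < n" "j < n"
  shows "norm ((A ^\<^sub>m k) $$ (i,j)) \<le> (\<Sum>i<n. \<Sum>j<n. norm (A $$ (i,j))) ^ k"
  using assms(2,3)
proof (induction k arbitrary: j)
  case 0
  then show ?case using A by (cases "i = j") simp_all
next
  case (Suc k)
  let ?s = "\<Sum>i<n. \<Sum>j<n. norm (A $$ (i,j))"
  have "norm ((A ^\<^sub>m Suc k) $$ (i,j)) = norm (\<Sum>m<n. (A ^\<^sub>m k) $$ (i,m) * A $$ (m,j))"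
    using A Suc.prems by (simp add: index_mult_mat_sum[of _ n n] del: index_mult_mat(1))
  also have "\<dots> \<le> (\<Sum>m<n. ?s ^ k * norm (A $$ (m,j)))"
    using Suc by (intro order.trans[OF sum_norm_le[OF order.refl]] sum_mono)
      (auto simp: norm_mult intro!: mult_right_mono)
  also have "\<dots> \<le> ?s ^ k * ?s"
    unfolding sum_distrib_left[symmetric] using Suc.prems
    by (intro mult_left_mono sum_mono member_le_sum) (auto intro!: sum_nonneg zero_le_power)
  finally show ?case by (simp add: mult.commute)
qed

lemma summable_mexp_series:
  fixes A :: "complex mat"
  assumes "A \<in> carrier_mat n n" "i < n" "j < n"
  shows "summable (\<lambda>k. norm ((A ^\<^sub>m k) $$ (i,j) / fact k))"
proof (rule summable_comparison_test[OF _ summable_exp[of "\<Sum>i<n. \<Sum>j<n. norm (A $$ (i,j))"]])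
  show "\<exists>N. \<forall>k\<ge>N. norm (norm ((A ^\<^sub>m k) $$ (i,j) / fact k))
      \<le> inverse (fact k) * (\<Sum>i<n. \<Sum>j<n. norm (A $$ (i,j))) ^ k"
    using norm_pow_mat_index_le[OF assms]
    by (intro exI[of _ 0] allI impI) (simp add: divide_inverse mult.commute norm_mult norm_inverse mult_left_mono)
qed

lemma mexp_carrier_mat: "A \<in> carrier_mat n n \<Longrightarrow> mexp A \<in> carrier_mat n n"
  by (simp add: mexp_def)

lemma index_mexp:
  "A \<in> carrier_mat n n \<Longrightarrow> i < n \<Longrightarrow> j < n \<Longrightarrow>
   mexp A $$ (i,j) = (\<Sum>k. (A ^\<^sub>m k) $$ (i,j) / fact k)"
  by (simp add: mexp_def)

lemma mexp_add_smult:
  fixes A :: "complex mat"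
  assumes A: "A \<in> carrier_mat n n"
  shows "mexp (a \<cdot>\<^sub>m A) * mexp (b \<cdot>\<^sub>m A) = mexp ((a + b) \<cdot>\<^sub>m A)"
proof (rule eq_matI)
  fix i j assume "i < dim_row (mexp ((a + b) \<cdot>\<^sub>m A))" "j < dim_col (mexp ((a + b) \<cdot>\<^sub>m A))"
  then have i: "i < n" and j: "j < n" using A by (auto simp: mexp_def)
  define f where "f = (\<lambda>z i j k. z ^ k * (A ^\<^sub>m k) $$ (i,j) / fact k)"
  have index_mexp_smult: "mexp (z \<cdot>\<^sub>m A) $$ (i,j) = suminf (f z i j)" if "i < n" "j < n" for z i j
    using A that by (simp add: index_mexp[of _ n] pow_mat_smult f_def)
  have summable_f: "summable (\<lambda>k. norm (f z i j k))" if "i < n" "j < n" for z i j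
    using summable_mexp_series[of "z \<cdot>\<^sub>m A" n i j] A that by (simp add: pow_mat_smult f_def)
  have cauchy: "(\<Sum>m<n. \<Sum>p\<le>k. f a i m p * f b m j (k - p)) = f (a + b) i j k" for k
  proof -
    have "(\<Sum>m<n. \<Sum>p\<le>k. f a i m p * f b m j (k - p))
        = (\<Sum>p\<le>k. a ^ p * b ^ (k - p) / (fact p * fact (k - p))
                    * (\<Sum>m<n. (A ^\<^sub>m p) $$ (i,m) * (A ^\<^sub>m (k - p)) $$ (m,j)))"
      unfolding f_def sum_distrib_left by (subst sum.swap) (simp add: field_simps)
    also have "\<dots> = (\<Sum>p\<le>k. a ^ p * b ^ (k - p) / (fact p * fact (k - p))) * (A ^\<^sub>m k) $$ (i,j)"
    proof -
      have "(\<Sum>m<n. (A ^\<^sub>m p) $$ (i,m) * (A ^\<^sub>m (k - p)) $$ (m,j)) = (A ^\<^sub>m k) $$ (i,j)"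
        if "p \<le> k" for p
        using A i j that pow_mat_add[OF A, of p "k - p"]
        by (simp add: index_mult_mat_sum[of "A ^\<^sub>m p" n n "A ^\<^sub>m (k - p)" n i j, symmetric]
            del: index_mult_mat(1))
      then show ?thesis unfolding sum_distrib_right by (intro sum.cong) auto
    qed
    also have "(\<Sum>p\<le>k. a ^ p * b ^ (k - p) / (fact p * fact (k - p))) = (a + b) ^ k / fact k"
      unfolding binomial_ring[of a b k] by (simp add: sum_divide_distrib binomial_fact field_simps)
    finally show ?thesis by (simp add: f_def)
  qed
  have "(\<lambda>k. \<Sum>m<n. \<Sum>p\<le>k. f a i m p * f b m j (k - p))
      sums (\<Sum>m<n. suminf (f a i m) * suminf (f b m j))"
    using i j by (intro sums_sum Cauchy_product_sums summable_f) auto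
  then have "f (a + b) i j sums (\<Sum>m<n. suminf (f a i m) * suminf (f b m j))"
    unfolding cauchy .
  then show "(mexp (a \<cdot>\<^sub>m A) * mexp (b \<cdot>\<^sub>m A)) $$ (i,j) = mexp ((a + b) \<cdot>\<^sub>m A) $$ (i,j)"
    using A i j
    by (simp add: index_mult_mat_sum[OF mexp_carrier_mat mexp_carrier_mat i j] index_mexp_smult
        sums_iff del: index_mult_mat(1))
qed (use A in \<open>simp_all add: mexp_def\<close>)

lemma mexp_zero_smult:
  fixes A :: "complex mat"
  assumes A: "A \<in> carrier_mat n n"
  shows "mexp (0 \<cdot>\<^sub>m A) = 1\<^sub>m n"
proof (rule eq_matI)
  fix i j assume "i < dim_row (1\<^sub>m n)" "j < dim_col (1\<^sub>m n)"
  then have i: "i < n" and j: "j < n" by auto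
  have "((0 \<cdot>\<^sub>m A) ^\<^sub>m k) $$ (i,j) / fact k = (if k = 0 then 1\<^sub>m n $$ (i,j) else 0)" for k
    using A i j by (cases k) (simp_all add: pow_mat_smult)
  then have "mexp (0 \<cdot>\<^sub>m A) $$ (i,j) = (\<Sum>k. if k = 0 then 1\<^sub>m n $$ (i,j) else 0)"
    using A i j by (simp add: index_mexp[of _ n])
  also have "\<dots> = 1\<^sub>m n $$ (i,j)"
    by (rule sums_unique[symmetric, OF sums_single])
  finally show "mexp (0 \<cdot>\<^sub>m A) $$ (i,j) = 1\<^sub>m n $$ (i,j)" .
qed (use A in \<open>simp_all add: mexp_def\<close>)

lemma cadj_mexp:
  fixes A :: "complex mat"
  assumes A: "A \<in> carrier_mat n n"
  shows "cadj (mexp A) = mexp (cadj A)"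
proof (rule eq_matI)
  have cA: "cadj A \<in> carrier_mat n n" by (rule cadj_carrier_mat[OF A])
  fix i j assume "i < dim_row (mexp (cadj A))" "j < dim_col (mexp (cadj A))"
  then have i: "i < n" and j: "j < n" using cA by (auto simp: mexp_def)
  have "summable (\<lambda>k. (A ^\<^sub>m k) $$ (j,i) / fact k)"
    by (rule summable_norm_cancel[OF summable_mexp_series[OF A j i]])
  then have "(\<lambda>k. cnj ((A ^\<^sub>m k) $$ (j,i) / fact k)) sums cnj (\<Sum>k. (A ^\<^sub>m k) $$ (j,i) / fact k)"
    by (simp only: sums_cnj summable_sums)
  moreover have "cnj ((A ^\<^sub>m k) $$ (j,i) / fact k) = (cadj A ^\<^sub>m k) $$ (i,j) / fact k" for k
  proof -
    have "cnj (fact k :: complex) = fact k" by (metis complex_cnj_of_nat of_nat_fact)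
    then show ?thesis
      using A i j unfolding cadj_pow_mat[OF A, symmetric] by (simp add: cadj_def)
  qed
  moreover have "cadj (mexp A) $$ (i,j) = cnj (\<Sum>k. (A ^\<^sub>m k) $$ (j,i) / fact k)"
    using A i j mexp_carrier_mat[OF A] by (simp add: cadj_def index_mexp)
  ultimately show "cadj (mexp A) $$ (i,j) = mexp (cadj A) $$ (i,j)"
    by (simp add: index_mexp[OF cA i j] sums_iff)
qed (use A in \<open>simp_all add: mexp_def cadj_def\<close>)

definition evolution :: "complex mat \<Rightarrow> real \<Rightarrow> complex mat" where
  "evolution H s = mexp ((\<i> * of_real s) \<cdot>\<^sub>m H)"

lemma evolution_carrier_mat: "H \<in> carrier_mat d d \<Longrightarrow> evolution H s \<in> carrier_mat d d"
  unfolding evolution_def by (rule mexp_carrier_mat) simp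

lemma evolution_zero: "H \<in> carrier_mat d d \<Longrightarrow> evolution H 0 = 1\<^sub>m d"
  unfolding evolution_def using mexp_zero_smult[of H d] by simp

lemma cadj_evolution:
  assumes "H \<in> carrier_mat d d" "hermitian H"
  shows "cadj (evolution H s) = mexp ((- \<i> * of_real s) \<cdot>\<^sub>m H)"
  using assms by (simp add: evolution_def cadj_mexp[of _ d] cadj_smult hermitian_def)

lemma evolution_mult_cadj:
  assumes H: "H \<in> carrier_mat d d" "hermitian H"
  shows "evolution H s * cadj (evolution H s) = 1\<^sub>m d"
  unfolding cadj_evolution[OF H] unfolding evolution_def mexp_add_smult[OF H(1)]
  using mexp_zero_smult[OF H(1)] by simp

lemma heis_carrier_mat:
  assumes "H \<in> carrier_mat d d" "A \<in> carrier_mat d d"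
  shows "heis H s A \<in> carrier_mat d d"
proof -
  have "mexp (z \<cdot>\<^sub>m H) \<in> carrier_mat d d" for z using assms(1) by (simp add: mexp_carrier_mat)
  then show ?thesis unfolding heis_def using assms(2) by (meson mult_carrier_mat)
qed

lemma heis_eq_evolution:
  assumes "H \<in> carrier_mat d d" "hermitian H"
  shows "heis H s A = evolution H s * A * cadj (evolution H s)"
  using cadj_evolution[OF assms] by (simp add: heis_def evolution_def)

lemma heis_one:
  assumes "H \<in> carrier_mat d d" "hermitian H"
  shows "heis H s (1\<^sub>m d) = 1\<^sub>m d"
  by (simp add: heis_eq_evolution[OF assms] evolution_mult_cadj[OF assms]
      right_mult_one_mat[OF evolution_carrier_mat[OF assms(1)]])

lemma time_ordered_eq_ordered_prod:
  "time_ordered d N \<epsilon> H Ops = ordered_prod d (\<lambda>t. heis H (\<epsilon> * real t) (Ops t)) N"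
  by (simp add: time_ordered_def ordered_prod_def)

section \<open>Tensor products of slice operators\<close>

lemma digit_less: "0 < d \<Longrightarrow> digit d x t < d"
  by (simp add: digit_def)

lemma digit_Suc: "digit d x (Suc t) = digit d (x div d) t"
  by (simp add: digit_def div_mult2_eq mult.commute)

lemma digit_add_pow_mult:
  assumes "z < d ^ n" "c < d" "t \<le> n"
  shows "digit d (z + d ^ n * c) t = (if t = n then c else digit d z t)"
proof (cases "t = n")
  case True
  with assms show ?thesis by (simp add: digit_def)
next
  case False
  define k where "k = n - Suc t"
  have n: "n = t + Suc k" using assms(3) False by (simp add: k_def)
  have "d > 0" using assms by auto
  moreover have "d ^ n * c = d ^ t * (d * (d ^ k * c))"
    unfolding n power_add by simp
  ultimately have "(z + d ^ n * c) div d ^ t = z div d ^ t + d * (d ^ k * c)"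
    by (simp only:) simp
  with False show ?thesis by (simp add: digit_def)
qed

lemma div_mod_less_of_less_mult:
  fixes i n m :: nat
  assumes "i < n * m"
  shows "i div m < n" "i mod m < m"
proof -
  have "0 < m" using assms by (cases m) auto
  then show "i div m < n" "i mod m < m" using assms by (auto simp: less_mult_imp_div_less)
qed

lemma sum_lessThan_mult_split:
  fixes m k :: nat
  shows "(\<Sum>z<m * k. f z) = (\<Sum>c<k. \<Sum>z<m. f (z + m * c))"
proof (induction k)
  case 0
  then show ?case by simp
next
  case (Suc k)
  have "(\<Sum>z<m * Suc k. f z) = (\<Sum>z<m * k. f z) + (\<Sum>z\<in>{m*k..<m*k+m}. f z)"
    by (simp add: lessThan_atLeast0 sum.atLeastLessThan_concat add.commute)
  also have "(\<Sum>z\<in>{m*k..<m*k+m}. f z) = (\<Sum>z<m. f (z + m * k))"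
    using sum.shift_bounds_nat_ivl[of f 0 "m*k" m] by (simp add: lessThan_atLeast0 add.commute)
  finally show ?case using Suc by simp
qed

lemma sum_prod_digits:
  fixes h :: "nat \<Rightarrow> nat \<Rightarrow> 'a::comm_semiring_1"
  shows "(\<Sum>z<d ^ n. \<Prod>t<n. h t (digit d z t)) = (\<Prod>t<n. \<Sum>c<d. h t c)"
proof (induction n)
  case 0
  then show ?case by simp
next
  case (Suc n)
  have "(\<Sum>z<d ^ Suc n. \<Prod>t<Suc n. h t (digit d z t))
      = (\<Sum>c<d. \<Sum>z<d ^ n. \<Prod>t<Suc n. h t (digit d (z + d ^ n * c) t))"
    unfolding power_Suc2 sum_lessThan_mult_split ..
  also have "\<dots> = (\<Sum>c<d. \<Sum>z<d ^ n. (\<Prod>t<n. h t (digit d z t)) * h n c)"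
  proof (intro sum.cong refl)
    fix c z assume "c \<in> {..<d}" "z \<in> {..<d ^ n}"
    then have "digit d (z + d ^ n * c) t = (if t = n then c else digit d z t)" if "t \<le> n" for t
      using that by (intro digit_add_pow_mult) auto
    then show "(\<Prod>t<Suc n. h t (digit d (z + d ^ n * c) t)) = (\<Prod>t<n. h t (digit d z t)) * h n c"
      by simp
  qed
  also have "\<dots> = (\<Sum>c<d. h n c) * (\<Sum>z<d ^ n. \<Prod>t<n. h t (digit d z t))"
    by (simp add: sum_distrib_left sum_distrib_right mult.commute sum.swap[where A="{..<d}"])
  finally show ?case using Suc by (simp add: mult.commute)
qed

lemma digits_eq_imp_eq:
  assumes "0 < d" "x < d ^ N" "y < d ^ N" "\<forall>t<N. digit d x t = digit d y t"
  shows "x = y"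
  using assms(2-4)
proof (induction N arbitrary: x y)
  case 0
  then show ?case by simp
next
  case (Suc N)
  have "x div d < d ^ N" "y div d < d ^ N"
    using Suc.prems assms(1) by (auto simp: less_mult_imp_div_less mult.commute power_Suc2)
  moreover have "\<forall>t<N. digit d (x div d) t = digit d (y div d) t"
    using Suc.prems(3) by (auto simp: digit_Suc[symmetric])
  ultimately have "x div d = y div d" using Suc.IH by blast
  moreover have "x mod d = y mod d" using Suc.prems(3) by (auto simp: digit_def dest: spec[of _ 0])
  ultimately show ?case by (metis div_mult_mod_eq)
qed

lemma index_tensor_ops:
  "x < d ^ N \<Longrightarrow> y < d ^ N \<Longrightarrow>
   tensor_ops d N F $$ (x,y) = (\<Prod>t<N. F t $$ (digit d x t, digit d y t))"
  by (simp add: tensor_ops_def)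

lemma tensor_ops_carrier_mat [simp]: "tensor_ops d N F \<in> carrier_mat (d ^ N) (d ^ N)"
  by (simp add: tensor_ops_def)

lemma tensor_ops_cong: "(\<And>t. t < N \<Longrightarrow> F t = G t) \<Longrightarrow> tensor_ops d N F = tensor_ops d N G"
  unfolding tensor_ops_def by (intro eq_matI) auto

lemma tensor_ops_mult:
  assumes d: "0 < d" and F: "\<And>t. t < N \<Longrightarrow> F t \<in> carrier_mat d d"
    and G: "\<And>t. t < N \<Longrightarrow> G t \<in> carrier_mat d d"
  shows "tensor_ops d N F * tensor_ops d N G = tensor_ops d N (\<lambda>t. F t * G t)"
proof (rule eq_matI)
  fix x y assume "x < dim_row (tensor_ops d N (\<lambda>t. F t * G t))"
    "y < dim_col (tensor_ops d N (\<lambda>t. F t * G t))"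
  then have x: "x < d ^ N" and y: "y < d ^ N" by (auto simp: tensor_ops_def)
  have "(tensor_ops d N F * tensor_ops d N G) $$ (x,y)
     = (\<Sum>z<d ^ N. \<Prod>t<N. F t $$ (digit d x t, digit d z t) * G t $$ (digit d z t, digit d y t))"
    using x y by (simp add: index_mult_mat_sum[of _ "d ^ N" "d ^ N" _ "d ^ N"] index_tensor_ops
        prod.distrib del: index_mult_mat(1))
  also have "\<dots> = (\<Prod>t<N. \<Sum>c<d. F t $$ (digit d x t, c) * G t $$ (c, digit d y t))"
    by (rule sum_prod_digits)
  also have "\<dots> = tensor_ops d N (\<lambda>t. F t * G t) $$ (x,y)"
    using x y d F G by (simp add: index_tensor_ops index_mult_mat_sum[of _ d d _ d] digit_less
        del: index_mult_mat(1))
  finally show "(tensor_ops d N F * tensor_ops d N G) $$ (x,y)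
      = tensor_ops d N (\<lambda>t. F t * G t) $$ (x,y)" .
qed (auto simp: tensor_ops_def)

lemma tensor_ops_one:
  assumes "0 < d"
  shows "tensor_ops d N (\<lambda>_. 1\<^sub>m d) = 1\<^sub>m (d ^ N)"
proof (rule eq_matI)
  fix x y assume "x < dim_row (1\<^sub>m (d ^ N))" "y < dim_col (1\<^sub>m (d ^ N))"
  then have x: "x < d ^ N" and y: "y < d ^ N" by auto
  have "tensor_ops d N (\<lambda>_. 1\<^sub>m d) $$ (x,y) = (\<Prod>t<N. if digit d x t = digit d y t then 1 else 0)"
    using x y assms by (simp add: index_tensor_ops digit_less)
  also have "\<dots> = 1\<^sub>m (d ^ N) $$ (x,y)"
    using digits_eq_imp_eq[OF assms x y] x y by (auto intro: prod_zero)
  finally show "tensor_ops d N (\<lambda>_. 1\<^sub>m d) $$ (x,y) = 1\<^sub>m (d ^ N) $$ (x,y)" .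
qed (auto simp: tensor_ops_def)

lemma cadj_tensor_ops:
  assumes "0 < d" and "\<And>t. t < N \<Longrightarrow> F t \<in> carrier_mat d d"
  shows "cadj (tensor_ops d N F) = tensor_ops d N (\<lambda>t. cadj (F t))"
proof -
  have "dim_row (F t) = d" "dim_col (F t) = d" if "t < N" for t
    using assms(2)[OF that] by auto
  then show ?thesis
    using assms(1) by (intro eq_matI) (auto simp: cadj_def tensor_ops_def digit_less intro!: prod.cong)
qed

lemma on_slice_carrier_mat [simp]: "on_slice d N t A \<in> carrier_mat (d ^ N) (d ^ N)"
  by (simp add: on_slice_def)

lemma foldr_on_slice:
  assumes d: "0 < d" and W: "\<And>t. W t \<in> carrier_mat d d" and "distinct xs"
  shows "foldr (\<lambda>t M. on_slice d N t (W t) * M) xs (1\<^sub>m (d ^ N))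
       = tensor_ops d N (\<lambda>s. if s \<in> set xs then W s else 1\<^sub>m d)"
  using \<open>distinct xs\<close>
proof (induction xs)
  case Nil
  then show ?case using tensor_ops_one[OF d] by simp
next
  case (Cons t xs)
  have "tensor_ops d N (\<lambda>s. if s = t then W t else 1\<^sub>m d)
        * tensor_ops d N (\<lambda>s. if s \<in> set xs then W s else 1\<^sub>m d)
      = tensor_ops d N (\<lambda>s. if s \<in> set (t # xs) then W s else 1\<^sub>m d)"
    using Cons.prems W W[THEN carrier_matD(1)] W[THEN carrier_matD(2)]
    by (subst tensor_ops_mult[OF d]) (auto intro!: tensor_ops_cong)
  then show ?case using Cons by (simp add: on_slice_def)
qed

lemma Vop_eq_tensor_ops:
  assumes "0 < d" "H \<in> carrier_mat d d"
  shows "Vop d N \<epsilon> H = tensor_ops d N (\<lambda>t. evolution H (\<epsilon> * real t))"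
  unfolding Vop_def evolution_def[symmetric]
  using assms by (subst foldr_on_slice) (auto intro: evolution_carrier_mat tensor_ops_cong)

lemma Vop_carrier_mat:
  assumes "0 < d" "H \<in> carrier_mat d d"
  shows "Vop d N \<epsilon> H \<in> carrier_mat (d ^ N) (d ^ N)"
  unfolding Vop_eq_tensor_ops[OF assms] by simp

lemma Vop_mult_cadj:
  assumes d: "0 < d" and H: "H \<in> carrier_mat d d" "hermitian H"
  shows "Vop d N \<epsilon> H * cadj (Vop d N \<epsilon> H) = 1\<^sub>m (d ^ N)"
  using d H evolution_carrier_mat[OF H(1)] cadj_carrier_mat[OF evolution_carrier_mat[OF H(1)]]
  by (simp add: Vop_eq_tensor_ops cadj_tensor_ops tensor_ops_mult evolution_mult_cadj tensor_ops_one)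

section \<open>The cyclic shift\<close>

lemma ctrace_cshift_mult_tensor_ops_sum:
  assumes d: "0 < d" and A: "\<And>t. t < N \<Longrightarrow> A t \<in> carrier_mat d d"
  shows "ctrace (cshift d N * tensor_ops d N A)
       = (\<Sum>z<d ^ N. \<Prod>t<N. A t $$ (digit d z t, digit d z ((t + N - 1) mod N)))"
proof -
  let ?s = "\<lambda>z t. digit d z ((t + N - 1) mod N)"
  have C: "cshift d N \<in> carrier_mat (d ^ N) (d ^ N)" by (simp add: cshift_def)
  have all_eq_prod: "(if \<forall>t<N. P t then 1 else 0) = (\<Prod>t<N. if P t then 1 else 0 :: complex)" for P
    by (auto simp: prod_zero_iff)
  have "ctrace (cshift d N * tensor_ops d N A)
      = (\<Sum>z<d ^ N. \<Sum>x<d ^ N. cshift d N $$ (x,z) * tensor_ops d N A $$ (z,x))"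
    by (subst sum.swap) (rule ctrace_mult_sum[OF C tensor_ops_carrier_mat])
  also have "\<dots> = (\<Sum>z<d ^ N. \<Sum>x<d ^ N.
      \<Prod>t<N. (if digit d x t = ?s z t then 1 else 0) * A t $$ (digit d z t, digit d x t))"
    by (intro sum.cong refl) (simp add: cshift_def index_tensor_ops all_eq_prod prod.distrib)
  also have "\<dots> = (\<Sum>z<d ^ N. \<Prod>t<N. \<Sum>c<d. (if c = ?s z t then 1 else 0) * A t $$ (digit d z t, c))"
    by (intro sum.cong refl) (rule sum_prod_digits)
  also have "\<dots> = (\<Sum>z<d ^ N. \<Prod>t<N. A t $$ (digit d z t, ?s z t))"
    using d by (intro sum.cong prod.cong refl)
      (simp add: digit_less if_distrib[of "\<lambda>x. x * _"] sum.delta cong: if_cong)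
  finally show ?thesis .
qed

lemma index_ordered_prod:
  fixes B :: "nat \<Rightarrow> complex mat"
  assumes B: "\<And>t. t \<le> n \<Longrightarrow> B t \<in> carrier_mat d d" and "a < d" "b < d"
  shows "ordered_prod d B (Suc n) $$ (a,b)
       = (\<Sum>z<d ^ n. \<Prod>t<Suc n.
            B t $$ (if t = n then a else digit d z t, if t = 0 then b else digit d z (t - 1)))"
  \<comment> \<open>Digit t of z is the summation index between the factors B (t + 1) and B t.\<close>
  using assms
proof (induction n arbitrary: a)
  case 0
  then show ?case by (simp add: ordered_prod_Suc right_mult_one_mat'[of "B 0"])
next
  case (Suc n)
  let ?P = "ordered_prod d B (Suc n)"
  let ?path = "\<lambda>n a z t. B t $$ (if t = n then a else digit d z t, if t = 0 then b else digit d z (t - 1))"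
  have P: "?P \<in> carrier_mat d d" using Suc.prems by (intro ordered_prod_carrier_mat) auto
  have IH: "?P $$ (c,b) = (\<Sum>z<d ^ n. \<Prod>t<Suc n. ?path n c z t)" if "c < d" for c
    using Suc.prems that by (intro Suc.IH) auto
  have "ordered_prod d B (Suc (Suc n)) $$ (a,b) = (\<Sum>c<d. B (Suc n) $$ (a,c) * ?P $$ (c,b))"
    using Suc.prems P
    by (simp add: ordered_prod_Suc[of d B "Suc n"] index_mult_mat_sum[of _ d d _ d] del: index_mult_mat(1))
  also have "\<dots> = (\<Sum>c<d. \<Sum>z<d ^ n. (\<Prod>t<Suc n. ?path n c z t) * B (Suc n) $$ (a,c))"
    by (simp add: IH sum_distrib_left mult.commute)
  also have "\<dots> = (\<Sum>c<d. \<Sum>z<d ^ n. \<Prod>t<Suc (Suc n). ?path (Suc n) a (z + d ^ n * c) t)"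
  proof (intro sum.cong refl)
    fix c z assume "c \<in> {..<d}" "z \<in> {..<d ^ n}"
    then have "digit d (z + d ^ n * c) t = (if t = n then c else digit d z t)" if "t \<le> n" for t
      using that by (intro digit_add_pow_mult) auto
    then show "(\<Prod>t<Suc n. ?path n c z t) * B (Suc n) $$ (a,c)
        = (\<Prod>t<Suc (Suc n). ?path (Suc n) a (z + d ^ n * c) t)"
      by (auto intro!: prod.cong)
  qed
  also have "\<dots> = (\<Sum>z<d ^ Suc n. \<Prod>t<Suc (Suc n). ?path (Suc n) a z t)"
    unfolding power_Suc2 sum_lessThan_mult_split ..
  finally show ?case .
qed

lemma ctrace_ordered_prod_Suc:
  fixes B :: "nat \<Rightarrow> complex mat"
  assumes "\<And>t. t \<le> n \<Longrightarrow> B t \<in> carrier_mat d d"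
  shows "ctrace (ordered_prod d B (Suc n))
       = (\<Sum>z<d ^ Suc n. \<Prod>t<Suc n. B t $$ (digit d z t, digit d z ((t + Suc n - 1) mod Suc n)))"
proof -
  have prev: "(t + n) mod Suc n = (if t = 0 then n else t - 1)" if "t < Suc n" for t
    using that by (cases t) (auto simp flip: add_Suc_right)
  have "ctrace (ordered_prod d B (Suc n))
      = (\<Sum>a<d. \<Sum>z<d ^ n. \<Prod>t<Suc n.
           B t $$ (if t = n then a else digit d z t, if t = 0 then a else digit d z (t - 1)))"
    using assms ordered_prod_carrier_mat[of "Suc n" B d] by (simp add: ctrace_def index_ordered_prod)
  also have "\<dots> = (\<Sum>a<d. \<Sum>z<d ^ n. \<Prod>t<Suc n.
           B t $$ (digit d (z + d ^ n * a) t, digit d (z + d ^ n * a) ((t + Suc n - 1) mod Suc n)))"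
    by (intro sum.cong prod.cong refl) (auto simp: prev digit_add_pow_mult)
  also have "\<dots> = (\<Sum>z<d ^ Suc n. \<Prod>t<Suc n.
           B t $$ (digit d z t, digit d z ((t + Suc n - 1) mod Suc n)))"
    unfolding power_Suc2 sum_lessThan_mult_split ..
  finally show ?thesis .
qed

lemma ctrace_cshift_mult_tensor_ops:
  assumes "0 < d" "0 < N" "\<And>t. t < N \<Longrightarrow> A t \<in> carrier_mat d d"
  shows "ctrace (cshift d N * tensor_ops d N A) = ctrace (ordered_prod d A N)"
proof -
  obtain n where "N = Suc n" using \<open>0 < N\<close> gr0_implies_Suc by blast
  then show ?thesis
    using assms by (simp only: ctrace_cshift_mult_tensor_ops_sum ctrace_ordered_prod_Suc)
qed

section \<open>Vectorisation\<close>

definition vec_of_mat :: "nat \<Rightarrow> complex mat \<Rightarrow> complex vec" where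
  "vec_of_mat D M = vec (D * D) (\<lambda>k. M $$ (k div D, k mod D))"

lemma sum_lessThan_square:
  fixes D :: nat
  shows "(\<Sum>k<D * D. f (k div D) (k mod D)) = (\<Sum>x<D. \<Sum>e<D. f x e)"
  unfolding sum_lessThan_mult_split[where m=D and k=D] by (intro sum.cong refl) auto

lemma dim_kron [simp]:
  "dim_row (kron A B) = dim_row A * dim_row B" "dim_col (kron A B) = dim_col A * dim_col B"
  by (simp_all add: kron_def)

lemma cadj_kron:
  assumes "A \<in> carrier_mat n n" "B \<in> carrier_mat m m"
  shows "cadj (kron A B) = kron (cadj A) (cadj B)"
  using assms by (intro eq_matI) (auto simp: cadj_def kron_def div_mod_less_of_less_mult)

lemma phi_plus_eq_vec_of_mat: "phi_plus D = vec_of_mat D (1\<^sub>m D)"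
  unfolding phi_plus_def vec_of_mat_def by (intro eq_vecI) (auto simp: div_mod_less_of_less_mult)

lemma kron_one_mult_vec_of_mat:
  assumes A: "A \<in> carrier_mat D D" and M: "M \<in> carrier_mat D D"
  shows "kron A (1\<^sub>m D) *\<^sub>v vec_of_mat D M = vec_of_mat D (A * M)"
proof (rule eq_vecI)
  fix k assume "k < dim_vec (vec_of_mat D (A * M))"
  then have k: "k < D * D" by (simp add: vec_of_mat_def)
  have "(kron A (1\<^sub>m D) *\<^sub>v vec_of_mat D M) $ k
      = (\<Sum>l<D * D. A $$ (k div D, l div D) * (if k mod D = l mod D then 1 else 0)
                    * M $$ (l div D, l mod D))"
    using A k by (simp add: scalar_prod_def kron_def vec_of_mat_def lessThan_atLeast0 div_mod_less_of_less_mult)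
  also have "\<dots> = (\<Sum>x<D. \<Sum>e<D. A $$ (k div D, x) * (if k mod D = e then 1 else 0) * M $$ (x, e))"
    by (rule sum_lessThan_square)
  also have "\<dots> = (A * M) $$ (k div D, k mod D)"
    using A M k by (simp add: index_mult_mat_sum[of _ D D _ D] div_mod_less_of_less_mult
        if_distrib[of "\<lambda>x. _ * x"] if_distrib[of "\<lambda>x. x * _"] sum.delta
        cong: if_cong del: index_mult_mat(1))
  finally show "(kron A (1\<^sub>m D) *\<^sub>v vec_of_mat D M) $ k = vec_of_mat D (A * M) $ k"
    using k by (simp add: vec_of_mat_def)
qed (use A in \<open>simp add: vec_of_mat_def\<close>)

lemma kron_one_mult_phi_plus:
  assumes "A \<in> carrier_mat D D"
  shows "kron A (1\<^sub>m D) *\<^sub>v phi_plus D = vec_of_mat D A"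
  using assms by (simp add: phi_plus_eq_vec_of_mat kron_one_mult_vec_of_mat)

lemma cadj_kron_one_mult_phi_plus:
  assumes "A \<in> carrier_mat D D"
  shows "cadj (kron A (1\<^sub>m D)) *\<^sub>v phi_plus D = vec_of_mat D (cadj A)"
  using assms cadj_carrier_mat[OF assms]
  by (simp add: cadj_kron[OF assms one_carrier_mat] cadj_one_mat kron_one_mult_phi_plus)

lemma braket_vec_of_mat:
  assumes A: "A \<in> carrier_mat D D" and M: "M \<in> carrier_mat D D"
  shows "braket (vec_of_mat D A) (vec_of_mat D M) = ctrace (cadj A * M)"
proof -
  have "braket (vec_of_mat D A) (vec_of_mat D M) = (\<Sum>x<D. \<Sum>e<D. cnj (A $$ (x,e)) * M $$ (x,e))"
    unfolding braket_def vec_of_mat_def sum_lessThan_square[symmetric]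
    by (simp add: scalar_prod_def lessThan_atLeast0 div_mod_less_of_less_mult)
  also have "\<dots> = ctrace (cadj A * M)"
    using A M cadj_carrier_mat[OF A]
    by (subst ctrace_mult_sum[of _ D D]) (auto simp: cadj_def intro: sum.swap)
  finally show ?thesis .
qed

lemma kron_one_mult_kron_one_phi_plus:
  assumes "A \<in> carrier_mat D D" "M \<in> carrier_mat D D"
  shows "kron A (1\<^sub>m D) *\<^sub>v (kron M (1\<^sub>m D) *\<^sub>v phi_plus D) = kron (A * M) (1\<^sub>m D) *\<^sub>v phi_plus D"
  using assms by (simp add: kron_one_mult_phi_plus kron_one_mult_vec_of_mat)

lemma braket_cadj_kron_phi_plus:
  assumes U: "U \<in> carrier_mat D D" and M: "M \<in> carrier_mat D D"
  shows "braket (cadj (kron U (1\<^sub>m D)) *\<^sub>v phi_plus D) (kron M (1\<^sub>m D) *\<^sub>v phi_plus D)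
       = ctrace (U * M)"
  using braket_vec_of_mat[OF cadj_carrier_mat[OF U] M]
  by (simp add: cadj_kron_one_mult_phi_plus[OF U] kron_one_mult_phi_plus[OF M] cadj_cadj)

lemma ctrace_smult_ket_bra_mult:
  assumes X: "X \<in> carrier_mat m m" and "dim_vec u = m" "dim_vec w = m"
  shows "ctrace ((c \<cdot>\<^sub>m ket_bra u w) * X) = c * braket w (X *\<^sub>v u)"
proof -
  have "ctrace ((c \<cdot>\<^sub>m ket_bra u w) * X) = (\<Sum>i<m. \<Sum>j<m. c * (u $ i * cnj (w $ j)) * X $$ (j, i))"
    using assms by (simp add: ctrace_def scalar_prod_def ket_bra_def lessThan_atLeast0)
  also have "\<dots> = c * (\<Sum>j<m. cnj (w $ j) * (\<Sum>i<m. X $$ (j, i) * u $ i))"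
    by (subst sum.swap) (simp add: sum_distrib_left mult_ac)
  also have "\<dots> = c * braket w (X *\<^sub>v u)"
    using assms by (simp add: braket_def scalar_prod_def lessThan_atLeast0)
  finally show ?thesis .
qed

section \<open>The correlation function\<close>

lemma half_Stilde_carrier_mat:
  assumes "0 < d" "H \<in> carrier_mat d d" "P \<in> carrier_mat (d ^ N) (d ^ N)"
  shows "half_Stilde d N \<epsilon> H P \<in> carrier_mat (d ^ N) (d ^ N)"
proof -
  have "Vop d N \<epsilon> H \<in> carrier_mat (d ^ N) (d ^ N)" by (rule Vop_carrier_mat[OF assms(1,2)])
  moreover have "mexp ((\<i> * of_real (\<epsilon> / 2)) \<cdot>\<^sub>m P) \<in> carrier_mat (d ^ N) (d ^ N)"
    using assms(3) by (simp add: mexp_carrier_mat)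
  ultimately show ?thesis unfolding half_Stilde_def by (meson cadj_carrier_mat mult_carrier_mat)
qed

lemma half_Stilde_square:
  assumes d: "0 < d" and H: "H \<in> carrier_mat d d" "hermitian H"
    and P: "P \<in> carrier_mat (d ^ N) (d ^ N)" and C: "mexp ((\<i> * of_real \<epsilon>) \<cdot>\<^sub>m P) = cshift d N"
  shows "half_Stilde d N \<epsilon> H P * half_Stilde d N \<epsilon> H P
       = cadj (Vop d N \<epsilon> H) * (cshift d N * Vop d N \<epsilon> H)"
proof -
  define V where "V = Vop d N \<epsilon> H"
  define S where "S = mexp ((\<i> * of_real (\<epsilon> / 2)) \<cdot>\<^sub>m P)"
  have V: "V \<in> carrier_mat (d ^ N) (d ^ N)" and cV: "cadj V \<in> carrier_mat (d ^ N) (d ^ N)"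
    using Vop_carrier_mat[OF d H(1)] cadj_carrier_mat by (auto simp: V_def)
  have S: "S \<in> carrier_mat (d ^ N) (d ^ N)" using P by (simp add: S_def mexp_carrier_mat)
  have SV: "S * V \<in> carrier_mat (d ^ N) (d ^ N)"
    and cVSV: "cadj V * (S * V) \<in> carrier_mat (d ^ N) (d ^ N)"
    using S V cV by auto
  have SS: "S * S = cshift d N"
    using mexp_add_smult[OF P, of "\<i> * of_real (\<epsilon> / 2)" "\<i> * of_real (\<epsilon> / 2)"] C
    by (simp add: S_def flip: distrib_left of_real_add)
  have "half_Stilde d N \<epsilon> H P = cadj V * (S * V)"
    unfolding half_Stilde_def V_def[symmetric] S_def[symmetric] by (rule assoc_mult_mat[OF cV S V])
  then have "half_Stilde d N \<epsilon> H P * half_Stilde d N \<epsilon> H P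
      = cadj V * (S * (V * (cadj V * (S * V))))"
    by (simp add: assoc_mult_mat[OF cV SV cVSV] assoc_mult_mat[OF S V cVSV])
  also have "V * (cadj V * (S * V)) = S * V"
  proof -
    have "V * cadj V = 1\<^sub>m (d ^ N)" unfolding V_def by (rule Vop_mult_cadj[OF d H])
    then show ?thesis by (simp add: assoc_mult_mat[OF V cV SV, symmetric] left_mult_one_mat[OF SV])
  qed
  also have "S * (S * V) = cshift d N * V"
    by (simp add: assoc_mult_mat[OF S S V, symmetric] SS)
  finally show ?thesis by (simp add: V_def)
qed

lemma Vop_sandwich_eq_tensor_ops:
  fixes \<epsilon> :: real
  assumes d: "0 < d" and H: "H \<in> carrier_mat d d" "hermitian H"
    and \<rho>: "\<rho> \<in> carrier_mat d d" and O: "\<And>t. t < N \<Longrightarrow> Ops t \<in> carrier_mat d d"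
  defines "B \<equiv> \<lambda>t. heis H (\<epsilon> * real t) (Ops t)"
  shows "Vop d N \<epsilon> H * (tensor_ops d N Ops * (on_slice d N 0 \<rho> * cadj (Vop d N \<epsilon> H)))
       = tensor_ops d N (B(0 := B 0 * \<rho>))"
proof -
  define W where "W t = evolution H (\<epsilon> * real t)" for t
  define R where "R (t :: nat) = (if t = 0 then \<rho> else 1\<^sub>m d)" for t
  have W: "W t \<in> carrier_mat d d" "cadj (W t) \<in> carrier_mat d d" for t
    using evolution_carrier_mat[OF H(1)] cadj_carrier_mat by (auto simp: W_def)
  have R: "R t \<in> carrier_mat d d" for t using \<rho> by (simp add: R_def)
  have RW: "R t * cadj (W t) \<in> carrier_mat d d" for t by (rule mult_carrier_mat[OF R W(2)])
  have ORW: "Ops t * (R t * cadj (W t)) \<in> carrier_mat d d" if "t < N" for t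
    by (rule mult_carrier_mat[OF O[OF that] RW])
  have "Vop d N \<epsilon> H * (tensor_ops d N Ops * (on_slice d N 0 \<rho> * cadj (Vop d N \<epsilon> H)))
      = tensor_ops d N (\<lambda>t. W t * (Ops t * (R t * cadj (W t))))"
    using d H W R O RW ORW
    by (simp add: Vop_eq_tensor_ops on_slice_def cadj_tensor_ops tensor_ops_mult
        flip: W_def R_def)
  also have "\<dots> = tensor_ops d N (B(0 := B 0 * \<rho>))"
  proof (rule tensor_ops_cong)
    fix t assume "t < N"
    then have "Ops t \<in> carrier_mat d d" by (rule O)
    then show "W t * (Ops t * (R t * cadj (W t))) = (B(0 := B 0 * \<rho>)) t"
      using W \<rho> evolution_zero[OF H(1)] left_mult_one_mat[OF W(2)]
      by (auto simp: B_def W_def R_def heis_eq_evolution[OF H] cadj_one_mat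
          assoc_mult_mat[of _ d d _ d _ d])
  qed
  finally show ?thesis .
qed

lemma ctrace_half_Stilde_sandwich:
  assumes d: "0 < d" and N: "0 < N" and H: "H \<in> carrier_mat d d" "hermitian H"
    and P: "P \<in> carrier_mat (d ^ N) (d ^ N)" and C: "mexp ((\<i> * of_real \<epsilon>) \<cdot>\<^sub>m P) = cshift d N"
    and \<rho>: "\<rho> \<in> carrier_mat d d" and O: "\<And>t. t < N \<Longrightarrow> Ops t \<in> carrier_mat d d"
  shows "ctrace (half_Stilde d N \<epsilon> H P
           * (tensor_ops d N Ops * (on_slice d N 0 \<rho> * half_Stilde d N \<epsilon> H P)))
       = ctrace (\<rho> * time_ordered d N \<epsilon> H Ops)"
proof -
  define U where "U = half_Stilde d N \<epsilon> H P"
  define V where "V = Vop d N \<epsilon> H"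
  define Y where "Y = tensor_ops d N Ops"
  define R where "R = on_slice d N 0 \<rho>"
  define B where "B = (\<lambda>t. heis H (\<epsilon> * real t) (Ops t))"
  have TO: "time_ordered d N \<epsilon> H Ops = ordered_prod d B N"
    by (simp add: time_ordered_eq_ordered_prod B_def)
  let ?D = "d ^ N"
  note assoc = assoc_mult_mat[of _ ?D ?D _ ?D _ ?D]
  have carr: "U \<in> carrier_mat ?D ?D" "V \<in> carrier_mat ?D ?D" "cadj V \<in> carrier_mat ?D ?D"
    "Y \<in> carrier_mat ?D ?D" "R \<in> carrier_mat ?D ?D" "cshift d N \<in> carrier_mat ?D ?D"
    using half_Stilde_carrier_mat[OF d H(1) P] Vop_carrier_mat[OF d H(1)] cadj_carrier_mat
    by (auto simp: U_def V_def Y_def R_def cshift_def)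
  have B: "B t \<in> carrier_mat d d" if "t < N" for t
    unfolding B_def by (rule heis_carrier_mat[OF H(1) O[OF that]])
  have "ctrace (U * (Y * (R * U))) = ctrace (Y * (R * (U * U)))"
    using carr ctrace_mult_comm[of U ?D ?D "Y * (R * U)"] by (simp add: assoc)
  also have "\<dots> = ctrace (V * (Y * (R * (cadj V * cshift d N))))"
    using carr ctrace_mult_comm[of "Y * (R * (cadj V * cshift d N))" ?D ?D V]
    by (simp add: assoc U_def V_def half_Stilde_square[OF d H P C])
  also have "\<dots> = ctrace (cshift d N * (V * (Y * (R * cadj V))))"
    using carr ctrace_mult_comm[of "V * (Y * (R * cadj V))" ?D ?D "cshift d N"] by (simp add: assoc)
  also have "\<dots> = ctrace (cshift d N * tensor_ops d N (B(0 := B 0 * \<rho>)))"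
    unfolding V_def Y_def R_def B_def using Vop_sandwich_eq_tensor_ops[OF d H \<rho> O] by simp
  also have "\<dots> = ctrace (ordered_prod d (B(0 := B 0 * \<rho>)) N)"
    using B \<rho> N by (intro ctrace_cshift_mult_tensor_ops[OF d N]) (auto intro: mult_carrier_mat)
  also have "\<dots> = ctrace (ordered_prod d B N * \<rho>)"
    using B \<rho> N ordered_prod_mult_right[of "N - 1" B d \<rho>] by simp
  also have "\<dots> = ctrace (\<rho> * time_ordered d N \<epsilon> H Ops)"
    unfolding TO using B \<rho> by (intro ctrace_mult_comm[of _ d d] ordered_prod_carrier_mat)
  finally show ?thesis by (simp add: U_def Y_def R_def)
qed

lemma ctrace_half_Stilde_sandwich_one:
  assumes d: "0 < d" and N: "0 < N" and H: "H \<in> carrier_mat d d" "hermitian H"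
    and P: "P \<in> carrier_mat (d ^ N) (d ^ N)" and C: "mexp ((\<i> * of_real \<epsilon>) \<cdot>\<^sub>m P) = cshift d N"
    and \<rho>: "\<rho> \<in> carrier_mat d d"
  shows "ctrace (half_Stilde d N \<epsilon> H P * (on_slice d N 0 \<rho> * half_Stilde d N \<epsilon> H P)) = ctrace \<rho>"
proof -
  have "on_slice d N 0 \<rho> * half_Stilde d N \<epsilon> H P \<in> carrier_mat (d ^ N) (d ^ N)"
    by (rule mult_carrier_mat[OF on_slice_carrier_mat half_Stilde_carrier_mat[OF d H(1) P]])
  note left_mult_one_mat[OF this]
  then have "ctrace (half_Stilde d N \<epsilon> H P * (on_slice d N 0 \<rho> * half_Stilde d N \<epsilon> H P))
      = ctrace (\<rho> * time_ordered d N \<epsilon> H (\<lambda>_. 1\<^sub>m d))"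
    using ctrace_half_Stilde_sandwich[OF d N H P C \<rho>, of "\<lambda>_. 1\<^sub>m d"]
    by (simp add: tensor_ops_one[OF d])
  also have "\<dots> = ctrace \<rho>"
    using \<rho> by (simp add: time_ordered_eq_ordered_prod heis_one[OF H] ordered_prod_one)
  finally show ?thesis .
qed

theorem corollary2:
  fixes d N :: nat and \<epsilon> :: real and H P \<rho> :: "complex mat"
    and Ops :: "nat \<Rightarrow> complex mat"
  assumes "d \<ge> 1" and "N \<ge> 1" and "\<epsilon> > 0"
    and "H \<in> carrier_mat d d" and "hermitian H"
    and "P \<in> carrier_mat (d ^ N) (d ^ N)" and "hermitian P"
    and "mexp ((\<i> * of_real \<epsilon>) \<cdot>\<^sub>m P) = cshift d N"
    and "\<rho> \<in> carrier_mat d d" and "psd \<rho>" and "Re (ctrace \<rho>) > 0"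
    and "\<forall>t<N. Ops t \<in> carrier_mat d d"
  shows
    "let D = d ^ N;
         \<rho>0 = on_slice d N 0 \<rho>;
         U = half_Stilde d N \<epsilon> H P;
         \<Psi> = kron (\<rho>0 * U) (1\<^sub>m D) *\<^sub>v phi_plus D;
         \<Psi>bar = cadj (kron U (1\<^sub>m D)) *\<^sub>v phi_plus D;
         R = (1 / braket \<Psi>bar \<Psi>) \<cdot>\<^sub>m ket_bra \<Psi> \<Psi>bar;
         X = kron (tensor_ops d N Ops) (1\<^sub>m D)
     in ctrace (R * X) = braket \<Psi>bar (X *\<^sub>v \<Psi>) / braket \<Psi>bar \<Psi>
      \<and> braket \<Psi>bar (X *\<^sub>v \<Psi>) / braket \<Psi>bar \<Psi>
          = ctrace (\<rho> * time_ordered d N \<epsilon> H Ops) / ctrace \<rho>"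
proof -
  have d: "0 < d" and N: "0 < N" using assms(1,2) by simp_all
  note H = assms(4,5) and P = assms(6) and C = assms(8) and \<rho> = assms(9)
  define D where "D = d ^ N"
  define U where "U = half_Stilde d N \<epsilon> H P"
  define \<rho>U where "\<rho>U = on_slice d N 0 \<rho> * U"
  define Y where "Y = tensor_ops d N Ops"
  have U: "U \<in> carrier_mat D D" unfolding U_def D_def by (rule half_Stilde_carrier_mat[OF d H(1) P])
  have \<rho>U: "\<rho>U \<in> carrier_mat D D" and Y: "Y \<in> carrier_mat D D"
    using mult_carrier_mat[OF on_slice_carrier_mat U[unfolded D_def]] by (simp_all add: \<rho>U_def Y_def D_def)
  have "ctrace (U * (Y * \<rho>U)) = ctrace (\<rho> * time_ordered d N \<epsilon> H Ops)"
    using ctrace_half_Stilde_sandwich[OF d N H P C \<rho>] assms(12) by (simp add: U_def Y_def \<rho>U_def)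
  moreover have "ctrace (U * \<rho>U) = ctrace \<rho>"
    using ctrace_half_Stilde_sandwich_one[OF d N H P C \<rho>] by (simp add: U_def \<rho>U_def)
  moreover have X: "kron Y (1\<^sub>m D) \<in> carrier_mat (D * D) (D * D)" using Y by auto
  ultimately show ?thesis
    using U \<rho>U Y
    by (simp add: Let_def kron_one_mult_kron_one_phi_plus braket_cadj_kron_phi_plus
        ctrace_smult_ket_bra_mult[OF X] flip: D_def U_def \<rho>U_def Y_def)
qed

end
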